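(* Let $m,n$ be integers with $0\le m\le n$. If $H\le G_n$ and $H$ has derived length $m$, then $H$ is isomorphic to a subgroup of $G_m$.
   Context: For a group $A$, $A\wr\mathbf{Z}=(\bigoplus_{i\in\mathbf{Z}}A)\rtimes\mathbf{Z}$ is the restricted wreath product with $\mathbf{Z}$ acting by index shift. $G_0$ is the trivial group and $G_n=\bigoplus_{i\in\mathbf{Z}}(G_{n-1}\wr\mathbf{Z})$ for $n\ge1$. *)

theory Defs
  imports "HOL-Algebra.Algebra"
begin

text \<open>A universal type hosting the elements of all groups G_n.
  Leaf represents the unique element of G_0; an element of
  G_(n+1) = direct sum over Z of (G_n wr Z) is Node F, where F i = (f, k) is the i-th
  coordinate, an element of G_n wr Z = (direct sum over Z of G_n) semidirect Z,
  f being the (finitely supported) base function and k the Z-component.\<close>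

datatype W = Leaf | Node "int \<Rightarrow> (int \<Rightarrow> W) \<times> int"

fun kids :: "W \<Rightarrow> int \<Rightarrow> (int \<Rightarrow> W) \<times> int" where
  "kids Leaf = (\<lambda>_. (\<lambda>_. Leaf, 0))"
| "kids (Node F) = F"

primrec G_one :: "nat \<Rightarrow> W" where
  "G_one 0 = Leaf"
| "G_one (Suc n) = Node (\<lambda>i. (\<lambda>j. G_one n, 0))"

primrec G_carrier :: "nat \<Rightarrow> W set" where
  "G_carrier 0 = {Leaf}"
| "G_carrier (Suc n) =
     {Node F | F.
        finite {i. F i \<noteq> (\<lambda>j. G_one n, 0)} \<and>
        (\<forall>i. (\<forall>j. fst (F i) j \<in> G_carrier n) \<and>
             finite {j. fst (F i) j \<noteq> G_one n})}"

text \<open>Multiplication in A wr Z: (f,k)(g,l) = (f \<cdot> (k\<cdot>g), k+l), where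
  (k\<cdot>g)(j) = g(j - k) is the index shift; direct sums are multiplied coordinatewise.\<close>
primrec G_mult :: "nat \<Rightarrow> W \<Rightarrow> W \<Rightarrow> W" where
  "G_mult 0 x y = Leaf"
| "G_mult (Suc n) x y =
     Node (\<lambda>i. (\<lambda>j. G_mult n (fst (kids x i) j) (fst (kids y i) (j - snd (kids x i))),
                 snd (kids x i) + snd (kids y i)))"

definition G :: "nat \<Rightarrow> W monoid" where
  "G n = \<lparr>carrier = G_carrier n, monoid.mult = G_mult n, one = G_one n\<rparr>"

definition has_derived_length :: "('a, 'b) monoid_scheme \<Rightarrow> 'a set \<Rightarrow> nat \<Rightarrow> bool" where
  "has_derived_length K H m \<longleftrightarrow>
     (derived K ^^ m) H = {\<one>\<^bsub>K\<^esub>} \<and> (\<forall>k<m. (derived K ^^ k) H \<noteq> {\<one>\<^bsub>K\<^esub>})"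

end

theory Submission
  imports Defs "HOL-Library.Countable"
begin

text \<open>By induction on \<open>n\<close>, every \<open>H \<le> G n\<close> whose \<open>m\<close>-th derived subgroup is trivial
  embeds in \<open>G m\<close>, for every \<open>m\<close>. For \<open>m = k + 1\<close>, \<open>G m\<close> is the
  restricted direct sum of countably many copies of \<open>G k \<wrong> \<int>\<close>, hence contains a restricted
  direct sum of countably many copies of itself. As \<open>H \<le> G (n + 1)\<close> embeds in the direct
  sum of its projections \<open>Q\<^sub>i \<le> G n \<wrong> \<int>\<close>, it suffices to embed each \<open>Q\<^sub>i\<close> in \<open>G m\<close>.
  If \<open>Q\<^sub>i\<close> lies in the base group, it embeds in the direct sum of its coordinate
  projections, subgroups of \<open>G n\<close> to which induction applies. Otherwise \<open>Q\<^sub>i\<close> maps onto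
  \<open>d\<int> \<subseteq> \<int>\<close> with \<open>d > 0\<close>, and the Kaloujnine-Krasner embedding sends \<open>Q\<^sub>i\<close> into \<open>d\<close>
  copies of \<open>P\<^sub>r \<wrong> \<int>\<close>, where the \<open>P\<^sub>r\<close> are the coordinate projections of the base part
  \<open>N\<close> of \<open>Q\<^sub>i\<close>. Every coordinate of an element of \<open>N\<close> is also a coordinate of a
  commutator of \<open>Q\<^sub>i\<close>, so the \<open>k\<close>-th derived subgroup of \<open>P\<^sub>r\<close> is trivial and \<open>P\<^sub>r\<close>
  embeds in \<open>G k\<close> by induction.\<close>

section \<open>Wreath products with \<open>\<int>\<close>\<close>

definition wreath_int :: "('a, 'b) monoid_scheme \<Rightarrow> ((int \<Rightarrow> 'a) \<times> int) monoid" where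
  "wreath_int A =
     \<lparr>carrier = {x. (\<forall>j. fst x j \<in> carrier A) \<and> finite {j. fst x j \<noteq> \<one>\<^bsub>A\<^esub>}},
      monoid.mult = (\<lambda>x y. (\<lambda>j. fst x j \<otimes>\<^bsub>A\<^esub> fst y (j - snd x), snd x + snd y)),
      one = (\<lambda>j. \<one>\<^bsub>A\<^esub>, 0)\<rparr>"

lemma wreath_int_simps:
  "carrier (wreath_int A) = {x. (\<forall>j. fst x j \<in> carrier A) \<and> finite {j. fst x j \<noteq> \<one>\<^bsub>A\<^esub>}}"
  "x \<otimes>\<^bsub>wreath_int A\<^esub> y = (\<lambda>j. fst x j \<otimes>\<^bsub>A\<^esub> fst y (j - snd x), snd x + snd y)"
  "\<one>\<^bsub>wreath_int A\<^esub> = (\<lambda>j. \<one>\<^bsub>A\<^esub>, 0)"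
  by (simp_all add: wreath_int_def)

lemma fst_mult_wreath_int: "fst (x \<otimes>\<^bsub>wreath_int A\<^esub> y) j = fst x j \<otimes>\<^bsub>A\<^esub> fst y (j - snd x)"
  and snd_mult_wreath_int [simp]: "snd (x \<otimes>\<^bsub>wreath_int A\<^esub> y) = snd x + snd y"
  and fst_one_wreath_int [simp]: "fst \<one>\<^bsub>wreath_int A\<^esub> j = \<one>\<^bsub>A\<^esub>"
  and snd_one_wreath_int [simp]: "snd \<one>\<^bsub>wreath_int A\<^esub> = 0"
  by (simp_all add: wreath_int_simps)

lemma fst_wreath_int_carrier: "x \<in> carrier (wreath_int A) \<Longrightarrow> fst x j \<in> carrier A"
  by (simp add: wreath_int_simps)

lemma finite_int_shift: "finite {j. P j} \<Longrightarrow> finite {j::int. P (j + k)}"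
  using finite_vimageI[of "{j. P j}" "\<lambda>j. j + k"] by (simp add: vimage_def inj_def)

lemma group_wreath_int:
  assumes "group A"
  shows "group (wreath_int A)"
proof (rule groupI)
  interpret A: group A by (rule assms)
  fix x y assume x: "x \<in> carrier (wreath_int A)" and y: "y \<in> carrier (wreath_int A)"
  have "finite {j. fst y (j + - snd x) \<noteq> \<one>\<^bsub>A\<^esub>}"
    using y by (intro finite_int_shift) (simp add: wreath_int_simps)
  moreover have "{j. fst x j \<otimes>\<^bsub>A\<^esub> fst y (j - snd x) \<noteq> \<one>\<^bsub>A\<^esub>} \<subseteq>
      {j. fst x j \<noteq> \<one>\<^bsub>A\<^esub>} \<union> {j. fst y (j + - snd x) \<noteq> \<one>\<^bsub>A\<^esub>}"
    using x y by (auto simp: wreath_int_simps)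
  ultimately show "x \<otimes>\<^bsub>wreath_int A\<^esub> y \<in> carrier (wreath_int A)"
    using x y by (auto simp: wreath_int_simps intro: finite_subset)
next
  interpret A: group A by (rule assms)
  fix x y z
  assume "x \<in> carrier (wreath_int A)" "y \<in> carrier (wreath_int A)" "z \<in> carrier (wreath_int A)"
  then show "x \<otimes>\<^bsub>wreath_int A\<^esub> y \<otimes>\<^bsub>wreath_int A\<^esub> z = x \<otimes>\<^bsub>wreath_int A\<^esub> (y \<otimes>\<^bsub>wreath_int A\<^esub> z)"
    by (auto simp: wreath_int_simps A.m_assoc algebra_simps)
next
  interpret A: group A by (rule assms)
  fix x assume x: "x \<in> carrier (wreath_int A)"
  let ?y = "(\<lambda>j. inv\<^bsub>A\<^esub> (fst x (j + snd x)), - snd x)"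
  have "finite {j. fst x (j + snd x) \<noteq> \<one>\<^bsub>A\<^esub>}"
    using x by (intro finite_int_shift) (simp add: wreath_int_simps)
  then have "?y \<in> carrier (wreath_int A)"
    using x by (auto simp: wreath_int_simps)
  moreover have "?y \<otimes>\<^bsub>wreath_int A\<^esub> x = \<one>\<^bsub>wreath_int A\<^esub>"
    using x by (auto simp: wreath_int_simps)
  ultimately show "\<exists>y \<in> carrier (wreath_int A). y \<otimes>\<^bsub>wreath_int A\<^esub> x = \<one>\<^bsub>wreath_int A\<^esub>"
    by blast
qed (use assms in \<open>auto simp: wreath_int_simps group.is_monoid\<close>)

lemma inv_wreath_int:
  assumes "group A" and "x \<in> carrier (wreath_int A)"
  shows "inv\<^bsub>wreath_int A\<^esub> x = (\<lambda>j. inv\<^bsub>A\<^esub> (fst x (j + snd x)), - snd x)"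
proof -
  interpret A: group A by (rule assms(1))
  interpret W: group "wreath_int A" by (rule group_wreath_int[OF assms(1)])
  have "finite {j. fst x (j + snd x) \<noteq> \<one>\<^bsub>A\<^esub>}"
    using assms(2) by (intro finite_int_shift) (simp add: wreath_int_simps)
  with assms(2) show ?thesis
    by (intro W.inv_equality) (auto simp: wreath_int_simps)
qed

lemma snd_inv_wreath_int [simp]:
  "group A \<Longrightarrow> x \<in> carrier (wreath_int A) \<Longrightarrow> snd (inv\<^bsub>wreath_int A\<^esub> x) = - snd x"
  by (simp add: inv_wreath_int)

lemma snd_int_pow_wreath_int:
  assumes "group A" and "x \<in> carrier (wreath_int A)"
  shows "snd (x [^]\<^bsub>wreath_int A\<^esub> (k::int)) = k * snd x"
proof -
  have "snd \<in> hom (wreath_int A) integer_group"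
    by (rule homI) (auto simp: wreath_int_simps)
  then show ?thesis
    using hom_int_pow[OF _ assms(2) group_wreath_int[OF assms(1)] group_integer_group] by simp
qed

lemma fst_conj_wreath_int:
  assumes "group A" and "T \<in> carrier (wreath_int A)" "y \<in> carrier (wreath_int A)" "snd y = 0"
  shows "fst (T \<otimes>\<^bsub>wreath_int A\<^esub> y \<otimes>\<^bsub>wreath_int A\<^esub> inv\<^bsub>wreath_int A\<^esub> T) r
           = fst T r \<otimes>\<^bsub>A\<^esub> fst y (r - snd T) \<otimes>\<^bsub>A\<^esub> inv\<^bsub>A\<^esub> (fst T r)"
  using assms by (simp add: inv_wreath_int wreath_int_simps)

lemma fst_commutator_wreath_int:
  assumes "group A" and "z \<in> carrier (wreath_int A)" "T \<in> carrier (wreath_int A)" "snd z = 0"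
    and "fst z (r - snd T) = \<one>\<^bsub>A\<^esub>"
  shows "fst (z \<otimes>\<^bsub>wreath_int A\<^esub> T \<otimes>\<^bsub>wreath_int A\<^esub> inv\<^bsub>wreath_int A\<^esub> z \<otimes>\<^bsub>wreath_int A\<^esub> inv\<^bsub>wreath_int A\<^esub> T) r
           = fst z r"
proof -
  interpret A: group A by (rule assms(1))
  interpret W: group "wreath_int A" by (rule group_wreath_int[OF assms(1)])
  have "z \<otimes>\<^bsub>wreath_int A\<^esub> T \<otimes>\<^bsub>wreath_int A\<^esub> inv\<^bsub>wreath_int A\<^esub> z \<otimes>\<^bsub>wreath_int A\<^esub> inv\<^bsub>wreath_int A\<^esub> T
      = z \<otimes>\<^bsub>wreath_int A\<^esub> (T \<otimes>\<^bsub>wreath_int A\<^esub> inv\<^bsub>wreath_int A\<^esub> z \<otimes>\<^bsub>wreath_int A\<^esub> inv\<^bsub>wreath_int A\<^esub> T)"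
    using assms by (simp add: W.m_assoc)
  moreover have "fst (T \<otimes>\<^bsub>wreath_int A\<^esub> inv\<^bsub>wreath_int A\<^esub> z \<otimes>\<^bsub>wreath_int A\<^esub> inv\<^bsub>wreath_int A\<^esub> T) r
      = fst T r \<otimes>\<^bsub>A\<^esub> fst (inv\<^bsub>wreath_int A\<^esub> z) (r - snd T) \<otimes>\<^bsub>A\<^esub> inv\<^bsub>A\<^esub> (fst T r)"
    using assms by (intro fst_conj_wreath_int) auto
  moreover have "fst (inv\<^bsub>wreath_int A\<^esub> z) (r - snd T) = \<one>\<^bsub>A\<^esub>"
    using assms by (simp add: inv_wreath_int)
  ultimately show ?thesis
    using assms by (simp add: fst_mult_wreath_int fst_wreath_int_carrier)
qed

section \<open>The groups \<open>G n\<close>\<close>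

lemma carrier_G_Suc:
  "carrier (G (Suc n)) = Node ` {F. (\<forall>i. F i \<in> carrier (wreath_int (G n))) \<and> finite {i. F i \<noteq> \<one>\<^bsub>wreath_int (G n)\<^esub>}}"
  by (auto simp: G_def wreath_int_def)

lemma mult_G_Suc: "x \<otimes>\<^bsub>G (Suc n)\<^esub> y = Node (\<lambda>i. kids x i \<otimes>\<^bsub>wreath_int (G n)\<^esub> kids y i)"
  by (simp add: G_def wreath_int_def)

lemma one_G_Suc: "\<one>\<^bsub>G (Suc n)\<^esub> = Node (\<lambda>i. \<one>\<^bsub>wreath_int (G n)\<^esub>)"
  by (simp add: G_def wreath_int_def)

lemma kids_one_G_Suc [simp]: "kids \<one>\<^bsub>G (Suc n)\<^esub> i = \<one>\<^bsub>wreath_int (G n)\<^esub>"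
  by (simp add: one_G_Suc)

lemma kids_mult_G_Suc [simp]: "kids (x \<otimes>\<^bsub>G (Suc n)\<^esub> y) i = kids x i \<otimes>\<^bsub>wreath_int (G n)\<^esub> kids y i"
  by (simp add: mult_G_Suc)

lemma G_Suc_elemD:
  assumes "x \<in> carrier (G (Suc n))"
  shows "x = Node (kids x)" "kids x i \<in> carrier (wreath_int (G n))"
    "finite {i. kids x i \<noteq> \<one>\<^bsub>wreath_int (G n)\<^esub>}"
  using assms by (auto simp: carrier_G_Suc)

lemma group_G_Suc:
  assumes "group (wreath_int (G n))"
  shows "group (G (Suc n))"
proof (rule groupI)
  interpret W: group "wreath_int (G n)" by (rule assms)
  fix x y assume x: "x \<in> carrier (G (Suc n))" and y: "y \<in> carrier (G (Suc n))"
  have "{i. kids x i \<otimes>\<^bsub>wreath_int (G n)\<^esub> kids y i \<noteq> \<one>\<^bsub>wreath_int (G n)\<^esub>}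
      \<subseteq> {i. kids x i \<noteq> \<one>\<^bsub>wreath_int (G n)\<^esub>} \<union> {i. kids y i \<noteq> \<one>\<^bsub>wreath_int (G n)\<^esub>}"
    by auto
  then have "finite {i. kids x i \<otimes>\<^bsub>wreath_int (G n)\<^esub> kids y i \<noteq> \<one>\<^bsub>wreath_int (G n)\<^esub>}"
    using G_Suc_elemD(3)[OF x] G_Suc_elemD(3)[OF y] by (rule finite_subset[OF _ finite_UnI])
  then show "x \<otimes>\<^bsub>G (Suc n)\<^esub> y \<in> carrier (G (Suc n))"
    using G_Suc_elemD(2)[OF x] G_Suc_elemD(2)[OF y] by (auto simp: carrier_G_Suc mult_G_Suc)
next
  interpret W: group "wreath_int (G n)" by (rule assms)
  fix x assume x: "x \<in> carrier (G (Suc n))"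
  let ?y = "Node (\<lambda>i. inv\<^bsub>wreath_int (G n)\<^esub> (kids x i))"
  have "{i. inv\<^bsub>wreath_int (G n)\<^esub> (kids x i) \<noteq> \<one>\<^bsub>wreath_int (G n)\<^esub>} = {i. kids x i \<noteq> \<one>\<^bsub>wreath_int (G n)\<^esub>}"
    using G_Suc_elemD(2)[OF x] by auto
  then have "?y \<in> carrier (G (Suc n))"
    using G_Suc_elemD[OF x] by (auto simp: carrier_G_Suc)
  moreover have "?y \<otimes>\<^bsub>G (Suc n)\<^esub> x = \<one>\<^bsub>G (Suc n)\<^esub>"
    using G_Suc_elemD(2)[OF x] by (simp add: mult_G_Suc one_G_Suc)
  ultimately show "\<exists>y \<in> carrier (G (Suc n)). y \<otimes>\<^bsub>G (Suc n)\<^esub> x = \<one>\<^bsub>G (Suc n)\<^esub>"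
    by blast
qed (use assms in \<open>auto simp: carrier_G_Suc mult_G_Suc one_G_Suc group.is_monoid
                     monoid.m_assoc monoid.l_one\<close>)

lemma group_G: "group (G n)"
proof (induction n)
  case 0
  show ?case by (rule groupI) (auto simp: G_def)
next
  case (Suc n)
  then show ?case by (intro group_G_Suc group_wreath_int)
qed

lemma group_wreath_int_G: "group (wreath_int (G n))"
  by (rule group_wreath_int[OF group_G])

lemma G_Suc_eqI:
  assumes "x \<in> carrier (G (Suc n))" "y \<in> carrier (G (Suc n))" "\<And>i. kids x i = kids y i"
  shows "x = y"
  using G_Suc_elemD(1)[OF assms(1)] G_Suc_elemD(1)[OF assms(2)] assms(3) by (metis ext)

section \<open>Embeddings into restricted direct powers\<close>

lemma group_hom_subgroup:
  assumes "group M" "subgroup N M" "group L" "h \<in> hom (M\<lparr>carrier := N\<rparr>) L"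
  shows "group_hom (M\<lparr>carrier := N\<rparr>) L h"
  using assms group.subgroup_imp_group by (auto simp: group_hom_def group_hom_axioms_def)

lemma derived_iter_subgroup:
  assumes "group M" "subgroup N M" "S \<subseteq> N"
  shows "(derived (M\<lparr>carrier := N\<rparr>) ^^ k) S = (derived M ^^ k) S"
proof (induction k)
  case 0
  show ?case by simp
next
  case (Suc k)
  interpret M: group M by (rule assms(1))
  interpret N: group "M\<lparr>carrier := N\<rparr>" by (rule M.subgroup_imp_group[OF assms(2)])
  have "(derived (M\<lparr>carrier := N\<rparr>) ^^ k) S \<subseteq> N"
    using N.exp_of_derived_in_carrier[of S k] assms(3) by simp
  then show ?case using Suc M.derived_consistent[OF _ assms(2)] by simp
qed

lemma derived_iter_hom_image:
  assumes "group M" "subgroup N M" "group L" "h \<in> hom (M\<lparr>carrier := N\<rparr>) L" "S \<subseteq> N"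
  shows "(derived L ^^ k) (h ` S) = h ` ((derived M ^^ k) S)"
proof -
  interpret h: group_hom "M\<lparr>carrier := N\<rparr>" L h by (rule group_hom_subgroup[OF assms(1-4)])
  show ?thesis
    using h.exp_of_derived_img[of S k] assms(5) derived_iter_subgroup[OF assms(1,2,5)] by simp
qed

lemma mon_trivial_subgroup:
  assumes "group L"
  shows "(\<lambda>_. \<one>\<^bsub>L\<^esub>) \<in> mon (M\<lparr>carrier := {\<one>\<^bsub>M\<^esub>}\<rparr>) L"
  using assms by (auto simp: mon_def hom_def group.is_monoid)

text \<open>The coordinate functions of an injective homomorphism from \<open>K\<close> into the restricted
  direct power of \<open>L\<close> indexed by the type \<open>'c\<close>.\<close>
definition direct_sum_embedding ::
    "('a, 'b) monoid_scheme \<Rightarrow> ('e, 'f) monoid_scheme \<Rightarrow> ('c \<Rightarrow> 'a \<Rightarrow> 'e) \<Rightarrow> bool" where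
  "direct_sum_embedding K L g \<longleftrightarrow>
     (\<forall>c. g c \<in> hom K L) \<and> (\<forall>x \<in> carrier K. finite {c. g c x \<noteq> \<one>\<^bsub>L\<^esub>}) \<and>
     (\<forall>x \<in> carrier K. \<forall>y \<in> carrier K. (\<forall>c. g c x = g c y) \<longrightarrow> x = y)"

lemma direct_sum_embeddingI:
  assumes "\<And>c. g c \<in> hom K L" and "\<And>x. x \<in> carrier K \<Longrightarrow> finite {c. g c x \<noteq> \<one>\<^bsub>L\<^esub>}"
    and "\<And>x y. x \<in> carrier K \<Longrightarrow> y \<in> carrier K \<Longrightarrow> (\<And>c. g c x = g c y) \<Longrightarrow> x = y"
  shows "direct_sum_embedding K L g"
  using assms by (auto simp: direct_sum_embedding_def)

lemma direct_sum_embeddingD: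
  assumes "direct_sum_embedding K L g"
  shows "g c \<in> hom K L" and "x \<in> carrier K \<Longrightarrow> finite {c. g c x \<noteq> \<one>\<^bsub>L\<^esub>}"
    and "x \<in> carrier K \<Longrightarrow> y \<in> carrier K \<Longrightarrow> (\<And>c. g c x = g c y) \<Longrightarrow> x = y"
  using assms by (auto simp: direct_sum_embedding_def)

lemma direct_sum_embedding_subgroup:
  assumes "subgroup H K" "direct_sum_embedding K L g"
  shows "direct_sum_embedding (K\<lparr>carrier := H\<rparr>) L g"
proof -
  have H: "x \<in> carrier K" if "x \<in> H" for x
    using subgroup.subset[OF assms(1)] that by blast
  show ?thesis
  proof (rule direct_sum_embeddingI)
  show "g c \<in> hom (K\<lparr>carrier := H\<rparr>) L" for c
    using H direct_sum_embeddingD(1)[OF assms(2), of c] by (auto simp: hom_def)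
  qed (use H direct_sum_embeddingD(2,3)[OF assms(2)] in auto)
qed

lemma direct_sum_embedding_mon_comp:
  assumes "\<phi> \<in> mon K M" "direct_sum_embedding M L g"
  shows "direct_sum_embedding K L (\<lambda>c x. g c (\<phi> x))"
proof (rule direct_sum_embeddingI)
  have \<phi>: "\<phi> \<in> hom K M" "inj_on \<phi> (carrier K)"
    using assms(1) by (auto simp: mon_def)
  show "(\<lambda>x. g c (\<phi> x)) \<in> hom K L" for c
    using \<phi>(1) direct_sum_embeddingD(1)[OF assms(2), of c] by (auto simp: hom_def Pi_def)
  show "finite {c. g c (\<phi> x) \<noteq> \<one>\<^bsub>L\<^esub>}" if "x \<in> carrier K" for x
    using that \<phi>(1) direct_sum_embeddingD(2)[OF assms(2)] by (auto simp: hom_def)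
  show "x = y" if "x \<in> carrier K" "y \<in> carrier K" "\<And>c. g c (\<phi> x) = g c (\<phi> y)" for x y
    using that \<phi> direct_sum_embeddingD(3)[OF assms(2), of "\<phi> x" "\<phi> y"]
    by (auto simp: hom_def inj_on_def)
qed

lemma direct_sum_embedding_compose:
  assumes "group M" "group L" and f: "direct_sum_embedding K M f"
    and f_Q: "\<And>i x. x \<in> carrier K \<Longrightarrow> f i x \<in> Q i" and Q: "\<And>i. subgroup (Q i) M"
    and g: "\<And>i. direct_sum_embedding (M\<lparr>carrier := Q i\<rparr>) L (g i)"
  shows "direct_sum_embedding K L (\<lambda>ic x. g (fst ic) (snd ic) (f (fst ic) x))"
proof (rule direct_sum_embeddingI)
  have g_one: "g i c \<one>\<^bsub>M\<^esub> = \<one>\<^bsub>L\<^esub>" for i c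
    using group_hom.hom_one[OF group_hom_subgroup[OF assms(1) Q assms(2) direct_sum_embeddingD(1)[OF g]]]
    by simp
  show "(\<lambda>x. g (fst ic) (snd ic) (f (fst ic) x)) \<in> hom K L" for ic
    using direct_sum_embeddingD(1)[OF f, of "fst ic"] direct_sum_embeddingD(1)[OF g, of "fst ic" "snd ic"] f_Q
    by (auto simp: hom_def)
  show "finite {ic. g (fst ic) (snd ic) (f (fst ic) x) \<noteq> \<one>\<^bsub>L\<^esub>}" if x: "x \<in> carrier K" for x
  proof (rule finite_subset)
    show "{ic. g (fst ic) (snd ic) (f (fst ic) x) \<noteq> \<one>\<^bsub>L\<^esub>}
        \<subseteq> Sigma {i. f i x \<noteq> \<one>\<^bsub>M\<^esub>} (\<lambda>i. {c. g i c (f i x) \<noteq> \<one>\<^bsub>L\<^esub>})"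
      using g_one by (auto simp: SigmaI)
    show "finite (Sigma {i. f i x \<noteq> \<one>\<^bsub>M\<^esub>} (\<lambda>i. {c. g i c (f i x) \<noteq> \<one>\<^bsub>L\<^esub>}))"
      using x f_Q direct_sum_embeddingD(2)[OF f] direct_sum_embeddingD(2)[OF g] by auto
  qed
  show "x = y" if x: "x \<in> carrier K" and y: "y \<in> carrier K"
    and eq: "\<And>ic. g (fst ic) (snd ic) (f (fst ic) x) = g (fst ic) (snd ic) (f (fst ic) y)" for x y
  proof (rule direct_sum_embeddingD(3)[OF f x y])
    show "f i x = f i y" for i
      using x y f_Q eq[of "(i, _)"] direct_sum_embeddingD(3)[OF g, of "f i x" i "f i y"] by auto
  qed
qed

lemma direct_sum_embedding_reindex:
  assumes "group L" "inj e" "direct_sum_embedding K L g"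
  shows "direct_sum_embedding K L (\<lambda>d x. if d \<in> range e then g (inv_into UNIV e d) x else \<one>\<^bsub>L\<^esub>)"
proof (rule direct_sum_embeddingI)
  interpret L: group L by (rule assms(1))
  show "(\<lambda>x. if d \<in> range e then g (inv_into UNIV e d) x else \<one>\<^bsub>L\<^esub>) \<in> hom K L" for d
    using assms(2) direct_sum_embeddingD(1)[OF assms(3)] by (auto simp: hom_def Pi_iff)
  show "finite {d. (if d \<in> range e then g (inv_into UNIV e d) x else \<one>\<^bsub>L\<^esub>) \<noteq> \<one>\<^bsub>L\<^esub>}" if "x \<in> carrier K" for x
  proof (rule finite_subset)
    show "{d. (if d \<in> range e then g (inv_into UNIV e d) x else \<one>\<^bsub>L\<^esub>) \<noteq> \<one>\<^bsub>L\<^esub>} \<subseteq> e ` {c. g c x \<noteq> \<one>\<^bsub>L\<^esub>}"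
      using assms(2) by auto
  qed (use that direct_sum_embeddingD(2)[OF assms(3)] in blast)
  show "x = y" if "x \<in> carrier K" "y \<in> carrier K"
    and "\<And>d. (if d \<in> range e then g (inv_into UNIV e d) x else \<one>\<^bsub>L\<^esub>) = (if d \<in> range e then g (inv_into UNIV e d) y else \<one>\<^bsub>L\<^esub>)"
    for x y
    using that(3)[of "e _"] assms(2) direct_sum_embeddingD(3)[OF assms(3) that(1,2)] by simp
qed

lemma direct_sum_embedding_int_index:
  fixes g :: "'c::countable \<Rightarrow> 'a \<Rightarrow> 'e"
  assumes "group L" "direct_sum_embedding K L g"
  obtains g' :: "int \<Rightarrow> 'a \<Rightarrow> 'e" where "direct_sum_embedding K L g'"
proof -
  have "inj (\<lambda>c. int (to_nat c))" by (simp add: inj_def)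
  then show ?thesis
    using direct_sum_embedding_reindex[OF assms(1) _ assms(2)] that by blast
qed

lemma direct_sum_embedding_kids:
  "direct_sum_embedding (G (Suc n)) (wreath_int (G n)) (\<lambda>i x. kids x i)"
proof (rule direct_sum_embeddingI)
  show "(\<lambda>x. kids x i) \<in> hom (G (Suc n)) (wreath_int (G n))" for i
    by (rule homI) (auto simp: G_Suc_elemD)
qed (auto intro: G_Suc_eqI simp: G_Suc_elemD)

lemma direct_sum_embedding_imp_mon_G_Suc:
  fixes g :: "int \<Rightarrow> 'a \<Rightarrow> (int \<Rightarrow> W) \<times> int"
  assumes "direct_sum_embedding K (wreath_int (G n)) g"
  shows "(\<lambda>x. Node (\<lambda>i. g i x)) \<in> mon K (G (Suc n))"
proof -
  have "Node (\<lambda>i. g i x) \<in> carrier (G (Suc n))" if "x \<in> carrier K" for x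
    unfolding carrier_G_Suc using that direct_sum_embeddingD(1,2)[OF assms]
    by (intro imageI) (auto simp: hom_def)
  then have "(\<lambda>x. Node (\<lambda>i. g i x)) \<in> hom K (G (Suc n))"
    using direct_sum_embeddingD(1)[OF assms] by (intro homI) (auto simp: mult_G_Suc hom_def)
  moreover have "inj_on (\<lambda>x. Node (\<lambda>i. g i x)) (carrier K)"
    using direct_sum_embeddingD(3)[OF assms] by (auto simp: inj_on_def fun_eq_iff)
  ultimately show ?thesis by (simp add: mon_def)
qed

lemma direct_sum_embedding_coordinates:
  assumes "group A" "subgroup N (wreath_int A)" "\<And>z. z \<in> N \<Longrightarrow> snd z = 0"
  shows "direct_sum_embedding ((wreath_int A)\<lparr>carrier := N\<rparr>) A (\<lambda>j z. fst z j)"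
proof (rule direct_sum_embeddingI)
  have N: "z \<in> carrier (wreath_int A)" if "z \<in> N" for z
    using subgroup.subset[OF assms(2)] that by blast
  show "(\<lambda>z. fst z j) \<in> hom ((wreath_int A)\<lparr>carrier := N\<rparr>) A" for j
    using N assms(3) by (intro homI) (auto simp: wreath_int_simps)
  show "finite {j. fst z j \<noteq> \<one>\<^bsub>A\<^esub>}" if "z \<in> carrier ((wreath_int A)\<lparr>carrier := N\<rparr>)" for z
    using N that by (simp add: wreath_int_simps)
  show "x = y" if "x \<in> carrier ((wreath_int A)\<lparr>carrier := N\<rparr>)" "y \<in> carrier ((wreath_int A)\<lparr>carrier := N\<rparr>)"
    "\<And>j. fst x j = fst y j" for x y
    using that assms(3) by (simp add: prod_eq_iff fun_eq_iff)
qed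

section \<open>The Kaloujnine-Krasner embedding\<close>

lemma int_set_least_positive_dvd:
  fixes S :: "int set"
  assumes closed: "\<And>x y k. x \<in> S \<Longrightarrow> y \<in> S \<Longrightarrow> x + k * y \<in> S" and "a \<in> S" "a \<noteq> 0"
  obtains d where "d \<in> S" "0 < d" "\<And>x. x \<in> S \<Longrightarrow> d dvd x"
proof -
  define p where "p = (LEAST p::nat. 0 < p \<and> int p \<in> S)"
  have "\<bar>a\<bar> \<in> S"
  proof (cases "0 < a")
    case False
    have "a + (-2) * a \<in> S" using closed[OF assms(2) assms(2)] .
    then show ?thesis using False assms(3) by (simp add: abs_if)
  qed (use assms(2) in simp)
  then have "0 < nat \<bar>a\<bar> \<and> int (nat \<bar>a\<bar>) \<in> S" using assms(3) by simp
  then have p: "0 < p \<and> int p \<in> S"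
    unfolding p_def by (rule LeastI[where P = "\<lambda>p. 0 < p \<and> int p \<in> S"])
  have "int p dvd x" if x: "x \<in> S" for x
  proof (rule ccontr)
    assume "\<not> int p dvd x"
    then have "x mod int p \<noteq> 0" by (simp add: dvd_eq_mod_eq_0)
    moreover have nonneg: "0 \<le> x mod int p" using p by simp
    moreover have "x mod int p \<in> S"
      using closed[OF x conjunct2[OF p], of "- (x div int p)"] minus_div_mult_eq_mod[of x "int p"]
      by simp
    ultimately have "p \<le> nat (x mod int p)"
      unfolding p_def by (intro Least_le[where P = "\<lambda>p. 0 < p \<and> int p \<in> S"]) simp
    moreover have "x mod int p < int p" using p by simp
    ultimately show False using nonneg by (simp add: le_nat_iff)
  qed
  then show ?thesis using p by (intro that[of "int p"]) auto
qed

locale wreath_int_lift =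
  fixes A :: "('a, 'b) monoid_scheme" and Q :: "((int \<Rightarrow> 'a) \<times> int) set" and t :: "(int \<Rightarrow> 'a) \<times> int"
  assumes group_A: "group A" and subgroup_Q: "subgroup Q (wreath_int A)"
    and t_in_Q: "t \<in> Q" and snd_t_pos: "0 < snd t" and snd_t_dvd: "\<And>x. x \<in> Q \<Longrightarrow> snd t dvd snd x"

lemma wreath_int_liftI:
  assumes A: "group A" and Q: "subgroup Q (wreath_int A)" and "x \<in> Q" "snd x \<noteq> 0"
  obtains t where "wreath_int_lift A Q t"
proof -
  interpret W: group "wreath_int A" by (rule group_wreath_int[OF A])
  have "x + k * y \<in> snd ` Q" if x: "x \<in> snd ` Q" and y: "y \<in> snd ` Q" for x y k
  proof -
    obtain u v where uv: "u \<in> Q" "v \<in> Q" "x = snd u" "y = snd v" using x y by blast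
    then have "u \<otimes>\<^bsub>wreath_int A\<^esub> v [^]\<^bsub>wreath_int A\<^esub> k \<in> Q"
      using Q by (simp add: W.subgroup_int_pow_closed subgroup.m_closed)
    moreover have "snd (u \<otimes>\<^bsub>wreath_int A\<^esub> v [^]\<^bsub>wreath_int A\<^esub> k) = x + k * y"
      using uv subgroup.mem_carrier[OF Q] by (simp add: snd_int_pow_wreath_int[OF A])
    ultimately show ?thesis by (metis image_eqI)
  qed
  then obtain d where d: "d \<in> snd ` Q" "0 < d" "\<And>y. y \<in> snd ` Q \<Longrightarrow> d dvd y"
    using int_set_least_positive_dvd[of "snd ` Q" "snd x"] assms(3,4) by blast
  then obtain t where t: "t \<in> Q" "snd t = d" by blast
  have "wreath_int_lift A Q t"
    unfolding wreath_int_lift_def using A Q t d by simp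
  then show ?thesis by (rule that)
qed

context wreath_int_lift
begin

abbreviation WA :: "((int \<Rightarrow> 'a) \<times> int) monoid" where
  "WA \<equiv> wreath_int A"

sublocale A: group A by (rule group_A)

sublocale WA: group WA by (rule group_wreath_int[OF group_A])

definition level :: "(int \<Rightarrow> 'a) \<times> int \<Rightarrow> int" where
  "level x = snd x div snd t"

definition base :: "((int \<Rightarrow> 'a) \<times> int) set" where
  "base = {z \<in> Q. snd z = 0}"

definition base_part :: "(int \<Rightarrow> 'a) \<times> int \<Rightarrow> (int \<Rightarrow> 'a) \<times> int" where
  "base_part x = x \<otimes>\<^bsub>WA\<^esub> t [^]\<^bsub>WA\<^esub> (- level x)"

text \<open>The cocycle of the Kaloujnine-Krasner embedding of \<open>Q\<close> with respect to the transversal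
  \<open>t [^] j\<close> of \<open>base\<close> in \<open>Q\<close>.\<close>
definition twist :: "int \<Rightarrow> (int \<Rightarrow> 'a) \<times> int \<Rightarrow> (int \<Rightarrow> 'a) \<times> int" where
  "twist j x = t [^]\<^bsub>WA\<^esub> (- j) \<otimes>\<^bsub>WA\<^esub> x \<otimes>\<^bsub>WA\<^esub> t [^]\<^bsub>WA\<^esub> (j - level x)"

lemma Q_carrier: "x \<in> Q \<Longrightarrow> x \<in> carrier WA"
  using subgroup.mem_carrier[OF subgroup_Q] .

lemma t_pow_carrier [simp]: "t [^]\<^bsub>WA\<^esub> (k::int) \<in> carrier WA"
  using Q_carrier[OF t_in_Q] by simp

lemma t_pow_in_Q: "t [^]\<^bsub>WA\<^esub> (k::int) \<in> Q"
  using WA.subgroup_int_pow_closed[OF subgroup_Q t_in_Q] .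

lemma snd_t_pow [simp]: "snd (t [^]\<^bsub>WA\<^esub> (k::int)) = k * snd t"
  using snd_int_pow_wreath_int[OF group_A Q_carrier[OF t_in_Q]] .

lemma snd_eq_level: "x \<in> Q \<Longrightarrow> snd x = level x * snd t"
  using snd_t_dvd by (simp add: level_def)

lemma level_mult:
  assumes "x \<in> Q" "y \<in> Q"
  shows "level (x \<otimes>\<^bsub>WA\<^esub> y) = level x + level y"
proof -
  have "snd (x \<otimes>\<^bsub>WA\<^esub> y) = (level x + level y) * snd t"
    using snd_eq_level[OF assms(1)] snd_eq_level[OF assms(2)] by (simp add: algebra_simps)
  then show ?thesis using snd_t_pos by (simp add: level_def)
qed

lemma t_pow_mult_t_pow:
  "w \<in> carrier WA \<Longrightarrow> t [^]\<^bsub>WA\<^esub> (a::int) \<otimes>\<^bsub>WA\<^esub> (t [^]\<^bsub>WA\<^esub> (b::int) \<otimes>\<^bsub>WA\<^esub> w) = t [^]\<^bsub>WA\<^esub> (a + b) \<otimes>\<^bsub>WA\<^esub> w"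
  using Q_carrier[OF t_in_Q] by (simp add: WA.int_pow_mult WA.m_assoc)

lemma subgroup_base: "subgroup base WA"
proof (rule WA.subgroupI)
  show "base \<subseteq> carrier WA" using Q_carrier by (auto simp: base_def)
  have "\<one>\<^bsub>WA\<^esub> \<in> base" using subgroup.one_closed[OF subgroup_Q] by (simp add: base_def)
  then show "base \<noteq> {}" by blast
qed (auto simp: base_def Q_carrier subgroup.m_inv_closed[OF subgroup_Q] subgroup.m_closed[OF subgroup_Q])

lemma snd_base: "z \<in> base \<Longrightarrow> snd z = 0"
  by (simp add: base_def)

lemma base_part_in_base: "x \<in> Q \<Longrightarrow> base_part x \<in> base"
  using snd_eq_level[of x] Q_carrier[of x] t_pow_in_Q
  by (simp add: base_def base_part_def subgroup.m_closed[OF subgroup_Q])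

lemma base_part_mult_t_pow: "x \<in> Q \<Longrightarrow> base_part x \<otimes>\<^bsub>WA\<^esub> t [^]\<^bsub>WA\<^esub> level x = x"
  using Q_carrier[of x] t_pow_mult_t_pow[of "\<one>\<^bsub>WA\<^esub>" "- level x" "level x"]
  by (simp add: base_part_def WA.m_assoc)

lemma twist_in_base: "x \<in> Q \<Longrightarrow> twist j x \<in> base"
  using snd_eq_level[of x] Q_carrier[of x] t_pow_in_Q
  by (simp add: base_def twist_def subgroup.m_closed[OF subgroup_Q] algebra_simps)

lemma twist_mult:
  assumes "x \<in> Q" "y \<in> Q"
  shows "twist j (x \<otimes>\<^bsub>WA\<^esub> y) = twist j x \<otimes>\<^bsub>WA\<^esub> twist (j - level x) y"
  using Q_carrier[OF assms(1)] Q_carrier[OF assms(2)]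
  by (simp add: twist_def level_mult[OF assms] WA.m_assoc t_pow_mult_t_pow diff_diff_eq)


lemma twist_eq_conj:
  assumes "x \<in> Q"
  shows "twist j x = t [^]\<^bsub>WA\<^esub> (- j) \<otimes>\<^bsub>WA\<^esub> base_part x \<otimes>\<^bsub>WA\<^esub> inv\<^bsub>WA\<^esub> (t [^]\<^bsub>WA\<^esub> (- j))"
proof -
  have "t [^]\<^bsub>WA\<^esub> (j - level x) = t [^]\<^bsub>WA\<^esub> (- level x) \<otimes>\<^bsub>WA\<^esub> inv\<^bsub>WA\<^esub> (t [^]\<^bsub>WA\<^esub> (- j))"
    using Q_carrier[OF t_in_Q] by (simp add: WA.int_pow_neg [symmetric] WA.int_pow_mult [symmetric])
  then show ?thesis
    using Q_carrier[OF assms] by (simp add: twist_def base_part_def WA.m_assoc)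
qed

lemma fst_twist:
  assumes "x \<in> Q"
  shows "fst (twist j x) r
    = fst (t [^]\<^bsub>WA\<^esub> (- j)) r \<otimes>\<^bsub>A\<^esub> fst (base_part x) (r + j * snd t) \<otimes>\<^bsub>A\<^esub> inv\<^bsub>A\<^esub> (fst (t [^]\<^bsub>WA\<^esub> (- j)) r)"
  using base_part_in_base[OF assms]
  by (simp add: twist_eq_conj[OF assms] fst_conj_wreath_int[OF group_A] base_def Q_carrier)

lemma finite_twist_support:
  assumes "x \<in> Q"
  shows "finite {j. fst (twist j x) r \<noteq> \<one>\<^bsub>A\<^esub>}"
proof (rule finite_subset)
  show "{j. fst (twist j x) r \<noteq> \<one>\<^bsub>A\<^esub>} \<subseteq> (\<lambda>j. r + j * snd t) -` {i. fst (base_part x) i \<noteq> \<one>\<^bsub>A\<^esub>}"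
    using fst_twist[OF assms] by (auto simp: fst_wreath_int_carrier)
  have "base_part x \<in> carrier WA"
    using base_part_in_base[OF assms] Q_carrier by (simp add: base_def)
  then show "finite ((\<lambda>j. r + j * snd t) -` {i. fst (base_part x) i \<noteq> \<one>\<^bsub>A\<^esub>})"
    using snd_t_pos by (intro finite_vimageI) (auto simp: wreath_int_simps inj_def)
qed

lemma derived_subset_base: "derived WA Q \<subseteq> base"
  unfolding derived_def
proof (rule WA.generate_subgroup_incl[OF _ subgroup_base])
  show "derived_set WA Q \<subseteq> base"
    using Q_carrier
    by (auto simp: base_def subgroup.m_closed[OF subgroup_Q] subgroup.m_inv_closed[OF subgroup_Q])
qed

text \<open>Commuting \<open>z\<close> with a power of \<open>t\<close> that shifts the support of \<open>z\<close> away from \<open>r\<close> keeps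
  the \<open>r\<close>-th coordinate of \<open>z\<close>.\<close>
lemma fst_base_in_derived:
  assumes "z \<in> base"
  shows "fst z r \<in> (\<lambda>z. fst z r) ` derived WA Q"
proof -
  have z: "z \<in> Q" "z \<in> carrier WA" "snd z = 0"
    using assms Q_carrier by (auto simp: base_def)
  have "finite ((\<lambda>s. r - s * snd t) -` {j. fst z j \<noteq> \<one>\<^bsub>A\<^esub>})"
    using z(2) snd_t_pos by (intro finite_vimageI) (auto simp: wreath_int_simps inj_def)
  then obtain s where s: "fst z (r - s * snd t) = \<one>\<^bsub>A\<^esub>"
    using ex_new_if_finite[OF infinite_UNIV_int] by auto
  let ?c = "z \<otimes>\<^bsub>WA\<^esub> t [^]\<^bsub>WA\<^esub> s \<otimes>\<^bsub>WA\<^esub> inv\<^bsub>WA\<^esub> z \<otimes>\<^bsub>WA\<^esub> inv\<^bsub>WA\<^esub> (t [^]\<^bsub>WA\<^esub> s)"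
  have "?c \<in> derived WA Q"
    unfolding derived_def using z(1) t_pow_in_Q by (blast intro: generate.incl)
  moreover have "fst ?c r = fst z r"
    using z s by (intro fst_commutator_wreath_int[OF group_A]) auto
  ultimately show ?thesis by (metis image_eqI)
qed

lemma coordinate_hom_base: "(\<lambda>z. fst z r) \<in> hom (WA\<lparr>carrier := base\<rparr>) A"
  using direct_sum_embeddingD(1)[OF direct_sum_embedding_coordinates[OF group_A subgroup_base snd_base]] .

lemma subgroup_coordinate_base: "subgroup ((\<lambda>z. fst z r) ` base) A"
  using group_hom.img_is_subgroup[OF group_hom_subgroup[OF WA.is_group subgroup_base group_A coordinate_hom_base]]
  by simp

lemma derived_iter_coordinate_base:
  "(derived A ^^ k) ((\<lambda>z. fst z r) ` base) \<subseteq> (\<lambda>z. fst z r) ` ((derived WA ^^ Suc k) Q)"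
proof -
  have "(derived A ^^ k) ((\<lambda>z. fst z r) ` base) \<subseteq> (derived A ^^ k) ((\<lambda>z. fst z r) ` derived WA Q)"
    using fst_base_in_derived by (intro A.mono_exp_of_derived) blast
  also have "\<dots> = (\<lambda>z. fst z r) ` ((derived WA ^^ k) (derived WA Q))"
    by (rule derived_iter_hom_image[OF WA.is_group subgroup_base group_A coordinate_hom_base derived_subset_base])
  also have "(derived WA ^^ k) (derived WA Q) = (derived WA ^^ Suc k) Q"
    by (simp only: funpow_Suc_right comp_def)
  finally show ?thesis .
qed

end

locale wreath_int_lift_embedding = wreath_int_lift +
  fixes B :: "('c, 'd) monoid_scheme" and \<phi> :: "int \<Rightarrow> 'a \<Rightarrow> 'c"
  assumes group_B: "group B"
    and \<phi>_mon: "\<And>r. \<phi> r \<in> mon (A\<lparr>carrier := (\<lambda>z. fst z r) ` base\<rparr>) B"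
begin

sublocale B: group B by (rule group_B)

text \<open>The components of the Kaloujnine-Krasner embedding of \<open>Q\<close> into the direct sum of
  \<open>snd t\<close> copies of \<open>B \<wrong> \<int>\<close>.\<close>
definition kk_component :: "int \<Rightarrow> (int \<Rightarrow> 'a) \<times> int \<Rightarrow> (int \<Rightarrow> 'c) \<times> int" where
  "kk_component r x =
     (if 0 \<le> r \<and> r < snd t then (\<lambda>j. \<phi> r (fst (twist j x) r), level x) else \<one>\<^bsub>wreath_int B\<^esub>)"

lemma \<phi>_hom: "group_hom (A\<lparr>carrier := (\<lambda>z. fst z r) ` base\<rparr>) B (\<phi> r)"
  using \<phi>_mon by (intro group_hom_subgroup[OF group_A subgroup_coordinate_base group_B]) (simp add: mon_def)

lemma fst_twist_in_coordinate_base: "x \<in> Q \<Longrightarrow> fst (twist j x) r \<in> (\<lambda>z. fst z r) ` base"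
  using twist_in_base by blast

lemma kk_component_hom: "kk_component r \<in> hom (WA\<lparr>carrier := Q\<rparr>) (wreath_int B)"
proof (rule homI)
  fix x assume "x \<in> carrier (WA\<lparr>carrier := Q\<rparr>)"
  then have x: "x \<in> Q" by simp
  have "{j. \<phi> r (fst (twist j x) r) \<noteq> \<one>\<^bsub>B\<^esub>} \<subseteq> {j. fst (twist j x) r \<noteq> \<one>\<^bsub>A\<^esub>}"
    using group_hom.hom_one[OF \<phi>_hom] by auto
  then have "finite {j. \<phi> r (fst (twist j x) r) \<noteq> \<one>\<^bsub>B\<^esub>}"
    using finite_twist_support[OF x] by (rule finite_subset)
  moreover have "\<phi> r (fst (twist j x) r) \<in> carrier B" for j
    using group_hom.hom_closed[OF \<phi>_hom] fst_twist_in_coordinate_base[OF x] by simp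
  ultimately show "kk_component r x \<in> carrier (wreath_int B)"
    by (simp add: kk_component_def wreath_int_simps)
next
  fix x y assume "x \<in> carrier (WA\<lparr>carrier := Q\<rparr>)" "y \<in> carrier (WA\<lparr>carrier := Q\<rparr>)"
  then have x: "x \<in> Q" and y: "y \<in> Q" by simp_all
  have "fst (twist j (x \<otimes>\<^bsub>WA\<^esub> y)) r = fst (twist j x) r \<otimes>\<^bsub>A\<^esub> fst (twist (j - level x) y) r" for j
    using twist_mult[OF x y] twist_in_base[OF x] by (simp add: fst_mult_wreath_int base_def)
  then have "\<phi> r (fst (twist j (x \<otimes>\<^bsub>WA\<^esub> y)) r) = \<phi> r (fst (twist j x) r) \<otimes>\<^bsub>B\<^esub> \<phi> r (fst (twist (j - level x) y) r)" for j
    using group_hom.hom_mult[OF \<phi>_hom] fst_twist_in_coordinate_base x y by simp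
  then show "kk_component r (x \<otimes>\<^bsub>WA\<lparr>carrier := Q\<rparr>\<^esub> y) = kk_component r x \<otimes>\<^bsub>wreath_int B\<^esub> kk_component r y"
    using level_mult[OF x y] by (auto simp: kk_component_def wreath_int_simps)
qed

lemma kk_component_inj:
  assumes x: "x \<in> Q" and y: "y \<in> Q" and eq: "\<And>r. kk_component r x = kk_component r y"
  shows "x = y"
proof -
  have level: "level x = level y"
    using eq[of 0] snd_t_pos by (simp add: kk_component_def)
  have "fst (base_part x) i = fst (base_part y) i" for i
  proof -
    define r j where "r = i mod snd t" and "j = i div snd t"
    have i: "i = r + j * snd t" and r: "0 \<le> r" "r < snd t"
      using snd_t_pos by (simp_all add: r_def j_def)
    have "\<phi> r (fst (twist j x) r) = \<phi> r (fst (twist j y) r)"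
      using eq[of r] r by (simp add: kk_component_def fun_eq_iff)
    moreover have "inj_on (\<phi> r) ((\<lambda>z. fst z r) ` base)"
      using \<phi>_mon[of r] by (simp add: mon_def)
    ultimately have "fst (twist j x) r = fst (twist j y) r"
      using fst_twist_in_coordinate_base[OF x] fst_twist_in_coordinate_base[OF y] inj_onD by metis
    moreover have "base_part x \<in> carrier WA" "base_part y \<in> carrier WA"
      using base_part_in_base x y Q_carrier by (auto simp: base_def)
    ultimately show ?thesis
      unfolding i using fst_twist[OF x] fst_twist[OF y]
      by (simp add: fst_wreath_int_carrier A.m_assoc)
  qed
  moreover have "snd (base_part x) = snd (base_part y)"
    using base_part_in_base x y by (simp add: base_def)
  ultimately have "base_part x = base_part y" by (simp add: prod_eq_iff fun_eq_iff)
  then show ?thesis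
    using base_part_mult_t_pow[OF x] base_part_mult_t_pow[OF y] level by metis
qed

lemma direct_sum_embedding_kk: "direct_sum_embedding (WA\<lparr>carrier := Q\<rparr>) (wreath_int B) kk_component"
proof (rule direct_sum_embeddingI)
  show "finite {r. kk_component r x \<noteq> \<one>\<^bsub>wreath_int B\<^esub>}" for x
    by (rule finite_subset[of _ "{0..<snd t}"]) (auto simp: kk_component_def)
qed (use kk_component_hom kk_component_inj in auto)

end

section \<open>Embedding subgroups of bounded derived length\<close>

lemma mon_G_Suc_of_components:
  fixes f :: "'i::countable \<Rightarrow> 'a \<Rightarrow> 'm"
  assumes "group M" and f: "direct_sum_embedding K M f"
    and f_P: "\<And>i x. x \<in> carrier K \<Longrightarrow> f i x \<in> P i" and P: "\<And>i. subgroup (P i) M"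
    and \<phi>: "\<And>i. \<phi> i \<in> mon (M\<lparr>carrier := P i\<rparr>) (G (Suc k))"
  shows "\<exists>\<psi>. \<psi> \<in> mon K (G (Suc k))"
proof -
  have "direct_sum_embedding (M\<lparr>carrier := P i\<rparr>) (wreath_int (G k)) (\<lambda>j x. kids (\<phi> i x) j)" for i
    using \<phi> by (rule direct_sum_embedding_mon_comp[OF _ direct_sum_embedding_kids])
  from direct_sum_embedding_compose[OF assms(1) group_wreath_int_G f f_P P this]
  obtain g :: "int \<Rightarrow> 'a \<Rightarrow> (int \<Rightarrow> W) \<times> int" where "direct_sum_embedding K (wreath_int (G k)) g"
    by (rule direct_sum_embedding_int_index[OF group_wreath_int_G])
  then show ?thesis by (blast dest: direct_sum_embedding_imp_mon_G_Suc)
qed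

lemma base_subgroup_mon_G_Suc:
  assumes IH: "\<And>P. subgroup P (G n) \<Longrightarrow> (derived (G n) ^^ Suc k) P = {\<one>\<^bsub>G n\<^esub>}
                 \<Longrightarrow> \<exists>\<phi>. \<phi> \<in> mon ((G n)\<lparr>carrier := P\<rparr>) (G (Suc k))"
    and Q: "subgroup Q (wreath_int (G n))"
    and derived_Q: "(derived (wreath_int (G n)) ^^ Suc k) Q = {\<one>\<^bsub>wreath_int (G n)\<^esub>}"
    and base: "\<And>x. x \<in> Q \<Longrightarrow> snd x = 0"
  shows "\<exists>\<phi>. \<phi> \<in> mon ((wreath_int (G n))\<lparr>carrier := Q\<rparr>) (G (Suc k))"
proof -
  let ?P = "\<lambda>j. (\<lambda>z. fst z j) ` Q"
  have coord: "direct_sum_embedding ((wreath_int (G n))\<lparr>carrier := Q\<rparr>) (G n) (\<lambda>j z. fst z j)"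
    by (rule direct_sum_embedding_coordinates[OF group_G Q base])
  note coord_hom = direct_sum_embeddingD(1)[OF coord]
  have P: "subgroup (?P j) (G n)" for j
    using group_hom.img_is_subgroup[OF group_hom_subgroup[OF group_wreath_int_G Q group_G coord_hom]]
    by simp
  have "(derived (G n) ^^ Suc k) (?P j) = (\<lambda>z. fst z j) ` ((derived (wreath_int (G n)) ^^ Suc k) Q)" for j
    by (rule derived_iter_hom_image[OF group_wreath_int_G Q group_G coord_hom subset_refl])
  then have "(derived (G n) ^^ Suc k) (?P j) = {\<one>\<^bsub>G n\<^esub>}" for j
    unfolding derived_Q by simp
  with IH P have "\<forall>j. \<exists>\<phi>. \<phi> \<in> mon ((G n)\<lparr>carrier := ?P j\<rparr>) (G (Suc k))" by blast
  then obtain \<phi> where "\<And>j. \<phi> j \<in> mon ((G n)\<lparr>carrier := ?P j\<rparr>) (G (Suc k))" by metis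
  then show ?thesis
    by (intro mon_G_Suc_of_components[OF group_G coord _ P]) auto
qed

lemma shifting_subgroup_mon_G_Suc:
  assumes IH: "\<And>P. subgroup P (G n) \<Longrightarrow> (derived (G n) ^^ k) P = {\<one>\<^bsub>G n\<^esub>}
                 \<Longrightarrow> \<exists>\<phi>. \<phi> \<in> mon ((G n)\<lparr>carrier := P\<rparr>) (G k)"
    and Q: "subgroup Q (wreath_int (G n))"
    and derived_Q: "(derived (wreath_int (G n)) ^^ Suc k) Q = {\<one>\<^bsub>wreath_int (G n)\<^esub>}"
    and "x \<in> Q" "snd x \<noteq> 0"
  shows "\<exists>\<phi>. \<phi> \<in> mon ((wreath_int (G n))\<lparr>carrier := Q\<rparr>) (G (Suc k))"
proof -
  obtain t where lift: "wreath_int_lift (G n) Q t"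
    using wreath_int_liftI[OF group_G Q assms(4,5)] .
  interpret wreath_int_lift "G n" Q t by (rule lift)
  have "(derived (G n) ^^ k) ((\<lambda>z. fst z r) ` base) = {\<one>\<^bsub>G n\<^esub>}" for r
  proof -
    have "(derived (G n) ^^ k) ((\<lambda>z. fst z r) ` base) \<subseteq> {\<one>\<^bsub>G n\<^esub>}"
      using derived_iter_coordinate_base[of k r] derived_Q by simp
    moreover have "\<one>\<^bsub>G n\<^esub> \<in> (derived (G n) ^^ k) ((\<lambda>z. fst z r) ` base)"
      using subgroup.one_closed[OF A.exp_of_derived_is_subgroup[OF subgroup_coordinate_base]] by simp
    ultimately show ?thesis by blast
  qed
  with IH subgroup_coordinate_base
  have "\<forall>r. \<exists>\<phi>. \<phi> \<in> mon ((G n)\<lparr>carrier := (\<lambda>z. fst z r) ` base\<rparr>) (G k)" by blast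
  then obtain \<phi> where "\<And>r. \<phi> r \<in> mon ((G n)\<lparr>carrier := (\<lambda>z. fst z r) ` base\<rparr>) (G k)" by metis
  then interpret wreath_int_lift_embedding "G n" Q t "G k" \<phi>
    using lift group_G by (simp add: wreath_int_lift_embedding_def wreath_int_lift_embedding_axioms_def)
  show ?thesis
    using direct_sum_embedding_imp_mon_G_Suc[OF direct_sum_embedding_kk] by blast
qed

lemma solvable_subgroup_mon_G:
  assumes "subgroup H (G n)" and "(derived (G n) ^^ m) H = {\<one>\<^bsub>G n\<^esub>}"
  shows "\<exists>\<phi>. \<phi> \<in> mon ((G n)\<lparr>carrier := H\<rparr>) (G m)"
  using assms
proof (induction n arbitrary: m H)
  case 0
  then have "H = {\<one>\<^bsub>G 0\<^esub>}"
    using subgroup.subset[OF 0(1)] subgroup.one_closed[OF 0(1)] by (auto simp: G_def)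
  then show ?case using mon_trivial_subgroup[OF group_G] by metis
next
  case (Suc n)
  show ?case
  proof (cases m)
    case 0
    then show ?thesis using Suc.prems(2) mon_trivial_subgroup[OF group_G] by auto
  next
    case (Suc k)
    let ?Q = "\<lambda>i. (\<lambda>x. kids x i) ` H"
    have kids: "direct_sum_embedding ((G (Suc n))\<lparr>carrier := H\<rparr>) (wreath_int (G n)) (\<lambda>i x. kids x i)"
      by (rule direct_sum_embedding_subgroup[OF Suc.prems(1) direct_sum_embedding_kids])
    note kids_hom = direct_sum_embeddingD(1)[OF kids]
    have Q: "subgroup (?Q i) (wreath_int (G n))" for i
      using group_hom.img_is_subgroup[OF group_hom_subgroup[OF group_G Suc.prems(1) group_wreath_int_G kids_hom]]
      by simp
    have "(derived (wreath_int (G n)) ^^ Suc k) (?Q i) = (\<lambda>x. kids x i) ` ((derived (G (Suc n)) ^^ m) H)" for i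
      unfolding \<open>m = Suc k\<close>
      by (rule derived_iter_hom_image[OF group_G Suc.prems(1) group_wreath_int_G kids_hom subset_refl])
    then have derived_Q: "(derived (wreath_int (G n)) ^^ Suc k) (?Q i) = {\<one>\<^bsub>wreath_int (G n)\<^esub>}" for i
      unfolding Suc.prems(2) by simp
    have "\<exists>\<phi>. \<phi> \<in> mon ((wreath_int (G n))\<lparr>carrier := ?Q i\<rparr>) (G (Suc k))" for i
    proof (cases "\<forall>x \<in> ?Q i. snd x = 0")
      case True
      then show ?thesis
        using base_subgroup_mon_G_Suc[OF Suc.IH Q derived_Q] by blast
    next
      case False
      then show ?thesis
        using shifting_subgroup_mon_G_Suc[OF Suc.IH Q derived_Q] by blast
    qed
    then obtain \<phi> where "\<And>i. \<phi> i \<in> mon ((wreath_int (G n))\<lparr>carrier := ?Q i\<rparr>) (G (Suc k))" by metis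
    then show ?thesis
      unfolding \<open>m = Suc k\<close> by (intro mon_G_Suc_of_components[OF group_wreath_int_G kids _ Q]) auto
  qed
qed

lemma mon_imp_iso_subgroup:
  assumes "group K" "group L" "\<phi> \<in> mon K L"
  shows "\<exists>S. subgroup S L \<and> K \<cong> L\<lparr>carrier := S\<rparr>"
proof -
  have "\<phi> \<in> iso K (subgroup_generated L (\<phi> ` carrier K))"
    using group.iso_onto_image[OF assms(1,2)] assms(3) by simp
  then show ?thesis
    unfolding subgroup_generated_def is_iso_def using group.generate_is_subgroup[OF assms(2)] by blast
qed

theorem lemma4:
  fixes m n :: nat and H :: "W set"
  assumes "m \<le> n"
    and "subgroup H (G n)"
    and "has_derived_length (G n) H m"
  shows "\<exists>K. subgroup K (G m) \<and> (G n)\<lparr>carrier := H\<rparr> \<cong> (G m)\<lparr>carrier := K\<rparr>"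
proof -
  have "(derived (G n) ^^ m) H = {\<one>\<^bsub>G n\<^esub>}"
    using assms(3) by (simp add: has_derived_length_def)
  then obtain \<phi> where "\<phi> \<in> mon ((G n)\<lparr>carrier := H\<rparr>) (G m)"
    using solvable_subgroup_mon_G[OF assms(2)] by blast
  then show ?thesis
    by (rule mon_imp_iso_subgroup[OF group.subgroup_imp_group[OF group_G assms(2)] group_G])
qed

end
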